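(* Let $\mu,\nu\in\mathcal{M}(\mathbb{R}^{d})$ and $r\in\mathbb{R}_{>0}^{d}$. Then for each integer $k\ge1$, \[ H(\mu*\nu^{*k};r)-H(\mu;r)\le k\big(H(\mu*\nu;r)-H(\mu;r)\big). \]
   Context: $\mathcal{M}(\mathbb{R}^d)$ is the set of compactly supported Borel probability measures on $\mathbb{R}^d$; $\nu^{*k}$ is the $k$-fold convolution of $\nu$ with itself. For $\mu\in\mathcal{M}(\mathbb{R}^d)$ the law of $X$ and $r\in\mathbb{R}^d_{>0}$, the average entropy is $H(\mu;r):=\int_{[0,1)^d}H(\lfloor X/r+x\rfloor)\,dx$, where $X/r$ and the floor are coordinatewise and $H(\cdot)$ is Shannon entropy (log base 2). *)

theory Defs
  imports "HOL-Probability.Probability"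
begin

definition cs_prob :: "(real ^ 'n) measure \<Rightarrow> bool" where
  "cs_prob M \<longleftrightarrow> prob_space M \<and> sets M = sets borel \<and>
     (\<exists>K. compact K \<and> emeasure M K = 1)"

fun conv_pow :: "(real ^ 'n) measure \<Rightarrow> nat \<Rightarrow> (real ^ 'n) measure" where
  "conv_pow N 0 = return borel 0"
| "conv_pow N (Suc k) = convolution N (conv_pow N k)"

definition floor_cell :: "real ^ 'n \<Rightarrow> real ^ 'n \<Rightarrow> real ^ 'n \<Rightarrow> int ^ 'n" where
  "floor_cell r x y = (\<chi> i. \<lfloor>y $ i / r $ i + x $ i\<rfloor>)"

text \<open>Shannon entropy (log base 2) of the discrete random variable floor(X/r + x), X ~ M.
  Note log 2 0 = 0 in Isabelle, giving the convention 0 log 0 = 0.\<close>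
definition cell_entropy :: "(real ^ 'n) measure \<Rightarrow> real ^ 'n \<Rightarrow> real ^ 'n \<Rightarrow> real" where
  "cell_entropy M r x =
     (\<Sum>\<^sub>\<infinity>z::int ^ 'n. - (measure M {y \<in> space M. floor_cell r x y = z}
        * log 2 (measure M {y \<in> space M. floor_cell r x y = z})))"

definition avg_entropy :: "(real ^ 'n) measure \<Rightarrow> real ^ 'n \<Rightarrow> real" where
  "avg_entropy M r = (LINT x : {x. \<forall>i. 0 \<le> x $ i \<and> x $ i < 1} | lborel. cell_entropy M r x)"

end

theory Submission
  imports Defs
begin

(* Rescale coordinates by r, so that the grid cells become unit cubes, and let G_M(v) be the
   M-mass of the cube with lower corner v. Averaging over the offset x sweeps every cube exactly
   once over R^d, hence H(M;r) ln 2 is the Lebesgue integral of -G_M ln G_M. Convolving M with N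
   replaces G_M by its average over the translates by the rescaled N. For probability measures
   b and c the functional u \<mapsto> \<integral> -u ln u is then submodular,
   H(a \<star> b \<star> c) + H(a) \<le> H(a \<star> c) + H(a \<star> b);
   after Fubini this is, pointwise, the log-sum inequality for the average over b.
   With a = \<mu>, b = \<nu>^j and c = \<nu> every increment H(\<mu> \<star> \<nu>^(j+1)) - H(\<mu> \<star> \<nu>^j) is at most
   H(\<mu> \<star> \<nu>) - H(\<mu>), and summing the increments gives the claim. *)

lemma neg_mult_ln_nonneg:
  fixes p :: real
  assumes "0 \<le> p" "p \<le> 1"
  shows "0 \<le> - (p * ln p)"
  using assms by (cases "p = 0") (auto intro: mult_nonneg_nonpos)

lemma neg_mult_ln_le_one:
  fixes p :: real
  assumes "0 \<le> p"
  shows "- (p * ln p) \<le> 1"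
proof (cases "p = 0")
  case False
  then have "0 < p" using assms by simp
  have "ln (1/p) \<le> 1/p - 1" using \<open>0 < p\<close> by (intro ln_le_minus_one) simp
  then have "p * (- ln p) \<le> p * (1/p - 1)"
    using \<open>0 < p\<close> by (intro mult_left_mono) (auto simp: ln_div)
  also have "\<dots> = 1 - p" using \<open>0 < p\<close> by (simp add: field_simps)
  finally show ?thesis using assms by simp
qed simp

text \<open>The tangent-line bound \<open>ln x \<ge> 1 - 1/x\<close> at \<open>x = p Q / (q P)\<close>.\<close>
lemma mult_ln_ratio_ge:
  fixes p q P Q :: real
  assumes "0 \<le> p" "0 \<le> q" "p > 0 \<longrightarrow> q > 0" "P > 0" "Q > 0"
  shows "p * ln p - p * ln q \<ge> p * ln (P / Q) + p - q * P / Q"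
proof (cases "p = 0")
  case False
  then have "p > 0" "q > 0" using assms by auto
  define x where "x = p * Q / (q * P)"
  have "x > 0" unfolding x_def using \<open>p > 0\<close> \<open>q > 0\<close> assms by simp
  have "ln (1/x) \<le> 1/x - 1" using \<open>x > 0\<close> by (intro ln_le_minus_one) simp
  then have "p * (- ln x) \<le> p * (1/x - 1)"
    using \<open>x > 0\<close> \<open>p > 0\<close> by (intro mult_left_mono) (auto simp: ln_div)
  moreover have "p * ln x = p * ln p + p * ln Q - p * ln q - p * ln P"
    unfolding x_def using \<open>p > 0\<close> \<open>q > 0\<close> assms by (simp add: ln_div ln_mult algebra_simps)
  moreover have "p * (1/x) = q * P / Q"
    unfolding x_def using \<open>p > 0\<close> \<open>q > 0\<close> assms by (simp add: field_simps)
  moreover have "p * ln (P / Q) = p * ln P - p * ln Q"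
    using assms by (simp add: ln_div right_diff_distrib)
  ultimately show ?thesis by (simp add: right_diff_distrib)
qed (use assms in simp)

text \<open>The value \<open>\<infinity>\<close> for \<open>q \<le> 0\<close> (with \<open>0 * \<infinity> = 0\<close>) lets the log-sum inequality below
  hold without any integrability hypothesis.\<close>
definition cross_ent :: "real \<Rightarrow> real \<Rightarrow> ennreal" where
  "cross_ent p q = ennreal p * (if q \<le> 0 then \<infinity> else ennreal (- ln q))"

lemma measurable_cross_ent [measurable (raw)]:
  assumes [measurable]: "f \<in> borel_measurable M" "g \<in> borel_measurable M"
  shows "(\<lambda>x. cross_ent (f x) (g x)) \<in> borel_measurable M"
  unfolding cross_ent_def by measurable

lemma cross_ent_0_left [simp]: "cross_ent 0 q = 0"
  by (simp add: cross_ent_def)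

lemma cross_ent_eq:
  assumes "0 \<le> p" "q \<le> 1" "0 < p \<longrightarrow> 0 < q"
  shows "cross_ent p q = ennreal (- (p * ln q))"
proof (cases "p = 0")
  case False
  then show ?thesis using assms by (simp add: cross_ent_def ennreal_mult[symmetric])
qed (simp add: cross_ent_def)

lemma cross_ent_self: "0 \<le> p \<Longrightarrow> p \<le> 1 \<Longrightarrow> cross_ent p p = ennreal (- (p * ln p))"
  by (rule cross_ent_eq) auto

lemma log_sum_inequality_integral:
  fixes p q :: "'a \<Rightarrow> real"
  assumes "integrable M p" "integrable M q"
    and "integrable M (\<lambda>t. p t * ln (p t))" "integrable M (\<lambda>t. p t * ln (q t))"
    and "\<And>t. 0 \<le> p t" "\<And>t. 0 \<le> q t" "AE t in M. 0 < p t \<longrightarrow> 0 < q t"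
    and "0 < integral\<^sup>L M p"
  shows "0 < integral\<^sup>L M q"
    and "integral\<^sup>L M p * ln (integral\<^sup>L M p) - integral\<^sup>L M p * ln (integral\<^sup>L M q)
      \<le> (\<integral>t. p t * ln (p t) - p t * ln (q t) \<partial>M)"
proof -
  define P Q where "P = integral\<^sup>L M p" and "Q = integral\<^sup>L M q"
  show "0 < Q"
  proof (rule ccontr)
    assume "\<not> 0 < Q"
    moreover have "0 \<le> Q"
      unfolding Q_def by (rule Bochner_Integration.integral_nonneg) (use assms(6) in auto)
    ultimately have "Q = 0" by simp
    then have "AE t in M. q t = 0"
      using integral_nonneg_eq_0_iff_AE[OF assms(2)] assms(6) by (simp add: Q_def)
    with assms(7) have "AE t in M. p t = 0" by eventually_elim (use assms(5) in \<open>smt (verit)\<close>)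
    then show False using assms(8) integral_eq_zero_AE by force
  qed
  have "P * ln P - P * ln Q = P * ln (P / Q)"
    using assms(8) \<open>0 < Q\<close> by (simp add: P_def ln_div right_diff_distrib)
  also have "\<dots> = (\<integral>t. p t * ln (P / Q) + p t - q t * P / Q \<partial>M)"
    using assms(1,2) \<open>0 < Q\<close> by (simp add: P_def Q_def)
  also have "\<dots> \<le> (\<integral>t. p t * ln (p t) - p t * ln (q t) \<partial>M)"
  proof (rule integral_mono_AE)
    show "integrable M (\<lambda>t. p t * ln (P / Q) + p t - q t * P / Q)"
      using assms(1,2) by auto
    show "integrable M (\<lambda>t. p t * ln (p t) - p t * ln (q t))"
      using assms(3,4) by auto
    show "AE t in M. p t * ln (P / Q) + p t - q t * P / Q \<le> p t * ln (p t) - p t * ln (q t)"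
      using assms(7) by eventually_elim (use assms(5,6,8) \<open>0 < Q\<close> mult_ln_ratio_ge in \<open>auto simp: P_def\<close>)
  qed
  finally show "P * ln P - P * ln Q \<le> (\<integral>t. p t * ln (p t) - p t * ln (q t) \<partial>M)" .
qed

lemma nn_integral_cross_ent_self:
  assumes "finite_measure M" and [measurable]: "p \<in> borel_measurable M"
    and p01: "\<And>t. 0 \<le> p t \<and> p t \<le> 1"
  shows "integrable M (\<lambda>t. p t * ln (p t))"
    and "(\<integral>\<^sup>+ t. cross_ent (p t) (p t) \<partial>M) = ennreal (\<integral>t. - (p t * ln (p t)) \<partial>M)"
    and "0 \<le> (\<integral>t. - (p t * ln (p t)) \<partial>M)"
proof -
  interpret finite_measure M by fact
  show int: "integrable M (\<lambda>t. p t * ln (p t))"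
    using p01 neg_mult_ln_nonneg neg_mult_ln_le_one
    by (intro integrable_const_bound[where B=1]) (auto simp: abs_le_iff)
  show "(\<integral>\<^sup>+ t. cross_ent (p t) (p t) \<partial>M) = ennreal (\<integral>t. - (p t * ln (p t)) \<partial>M)"
    using p01 neg_mult_ln_nonneg
    by (subst nn_integral_eq_integral[symmetric]) (auto intro!: nn_integral_cong simp: cross_ent_self int)
  show "0 \<le> (\<integral>t. - (p t * ln (p t)) \<partial>M)"
    using p01 neg_mult_ln_nonneg by (intro Bochner_Integration.integral_nonneg) auto
qed

lemma nn_integral_cross_ent_finite:
  assumes [measurable]: "p \<in> borel_measurable M" "q \<in> borel_measurable M"
    and "\<And>t. 0 \<le> p t" "\<And>t. 0 \<le> q t \<and> q t \<le> 1"
    and finite: "(\<integral>\<^sup>+ t. cross_ent (p t) (q t) \<partial>M) \<noteq> \<infinity>"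
  shows "AE t in M. 0 < p t \<longrightarrow> 0 < q t"
    and "integrable M (\<lambda>t. p t * ln (q t))"
    and "(\<integral>\<^sup>+ t. cross_ent (p t) (q t) \<partial>M) = ennreal (\<integral>t. - (p t * ln (q t)) \<partial>M)"
    and "0 \<le> (\<integral>t. - (p t * ln (q t)) \<partial>M)"
proof -
  have "AE t in M. cross_ent (p t) (q t) \<noteq> \<infinity>"
    using finite by (intro nn_integral_PInf_AE) auto
  then show pos: "AE t in M. 0 < p t \<longrightarrow> 0 < q t"
    by eventually_elim (auto simp: cross_ent_def ennreal_mult_top split: if_splits)
  have nonneg: "0 \<le> - (p t * ln (q t))" for t
    using assms(3,4)[of t] by (cases "q t = 0") (auto intro: mult_nonneg_nonpos)
  have eq: "(\<integral>\<^sup>+ t. cross_ent (p t) (q t) \<partial>M) = (\<integral>\<^sup>+ t. ennreal (- (p t * ln (q t))) \<partial>M)"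
    using pos by (intro nn_integral_cong_AE) (auto intro!: cross_ent_eq simp: assms(3,4))
  have int: "integrable M (\<lambda>t. - (p t * ln (q t)))"
    using finite nonneg by (intro integrableI_nonneg) (auto simp: eq top.not_eq_extremum)
  then show "integrable M (\<lambda>t. p t * ln (q t))" by simp
  show "(\<integral>\<^sup>+ t. cross_ent (p t) (q t) \<partial>M) = ennreal (\<integral>t. - (p t * ln (q t)) \<partial>M)"
    unfolding eq using int nonneg by (intro nn_integral_eq_integral) auto
  show "0 \<le> (\<integral>t. - (p t * ln (q t)) \<partial>M)"
    using nonneg by (intro Bochner_Integration.integral_nonneg)
qed

text \<open>The log-sum inequality \<open>P ln (P/Q) \<le> \<integral> p ln (p/q)\<close> for \<open>P = \<integral> p\<close>, \<open>Q = \<integral> q\<close>,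
  written with all four terms nonnegative.\<close>
lemma log_sum_inequality:
  fixes p q :: "'a \<Rightarrow> real"
  assumes "prob_space M"
    and [measurable]: "p \<in> borel_measurable M" "q \<in> borel_measurable M"
    and p01: "\<And>t. 0 \<le> p t \<and> p t \<le> 1" and q01: "\<And>t. 0 \<le> q t \<and> q t \<le> 1"
    and P: "ennreal P = (\<integral>\<^sup>+ t. ennreal (p t) \<partial>M)" "0 \<le> P"
    and Q: "ennreal Q = (\<integral>\<^sup>+ t. ennreal (q t) \<partial>M)" "0 \<le> Q"
  shows "cross_ent P Q + (\<integral>\<^sup>+ t. cross_ent (p t) (p t) \<partial>M)
    \<le> (\<integral>\<^sup>+ t. cross_ent (p t) (q t) \<partial>M) + cross_ent P P"
proof -
  interpret prob_space M by fact
  have int_p: "integrable M p" and int_q: "integrable M q"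
    using p01 q01 by (auto intro: integrable_const_bound[where B=1])
  have P_eq: "P = integral\<^sup>L M p" and Q_eq: "Q = integral\<^sup>L M q"
    using P Q nn_integral_eq_integral[OF int_p] nn_integral_eq_integral[OF int_q] p01 q01
    by (simp_all add: integral_nonneg)
  note ent_pp = nn_integral_cross_ent_self[OF finite_measure_axioms assms(2) p01]
  show ?thesis
  proof (cases "P = 0")
    case True
    then have "AE t in M. p t = 0"
      using integral_nonneg_eq_0_iff_AE[OF int_p] p01 P_eq by simp
    then have "AE t in M. cross_ent (p t) (p t) = 0"
      by eventually_elim simp
    then have "(\<integral>\<^sup>+ t. cross_ent (p t) (p t) \<partial>M) = 0"
      by (simp add: nn_integral_0_iff_AE)
    then show ?thesis using True by simp
  next
    case False
    show ?thesis
    proof (cases "(\<integral>\<^sup>+ t. cross_ent (p t) (q t) \<partial>M) = \<infinity>")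
      case False
      have "\<And>t. 0 \<le> p t" using p01 by simp
      note ent_pq = nn_integral_cross_ent_finite[OF assms(2,3) this q01 False]
      have "0 < P" using \<open>P \<noteq> 0\<close> P(2) by simp
      have "P \<le> 1" "Q \<le> 1"
        using integral_mono[OF int_p, of "\<lambda>_. 1"] integral_mono[OF int_q, of "\<lambda>_. 1"] p01 q01
        by (auto simp: P_eq Q_eq prob_space)
      note log_sum = log_sum_inequality_integral[OF int_p int_q ent_pp(1) ent_pq(2)]
      have "0 < Q" using log_sum(1) p01 q01 ent_pq(1) \<open>0 < P\<close> by (simp add: P_eq Q_eq)
      have "P * ln P - P * ln Q \<le> (\<integral>t. p t * ln (p t) - p t * ln (q t) \<partial>M)"
        using log_sum(2) p01 q01 ent_pq(1) \<open>0 < P\<close> by (simp add: P_eq Q_eq)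
      then have "- (P * ln Q) + (\<integral>t. - (p t * ln (p t)) \<partial>M)
          \<le> (\<integral>t. - (p t * ln (q t)) \<partial>M) + - (P * ln P)"
        using ent_pp ent_pq p01 by simp
      then have "ennreal (- (P * ln Q)) + ennreal (\<integral>t. - (p t * ln (p t)) \<partial>M)
          \<le> ennreal (\<integral>t. - (p t * ln (q t)) \<partial>M) + ennreal (- (P * ln P))"
        by (subst (1 2) ennreal_plus[symmetric])
          (use ent_pp(3) ent_pq(4) \<open>0 < P\<close> \<open>0 < Q\<close> \<open>P \<le> 1\<close> \<open>Q \<le> 1\<close> in
            \<open>auto intro: mult_nonneg_nonpos ennreal_leI\<close>)
      then show ?thesis
        unfolding ent_pp(2) ent_pq(3) using \<open>0 < P\<close> \<open>0 < Q\<close> \<open>P \<le> 1\<close> \<open>Q \<le> 1\<close>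
        by (simp add: cross_ent_eq cross_ent_self)
    qed simp
  qed
qed

lemma nn_integral_lborel_translate:
  fixes F :: "'a::euclidean_space \<Rightarrow> ennreal"
  assumes [measurable]: "F \<in> borel_measurable borel"
  shows "(\<integral>\<^sup>+ v. F (v - w) \<partial>lborel) = (\<integral>\<^sup>+ v. F v \<partial>lborel)"
proof -
  have "(\<integral>\<^sup>+ v. F v \<partial>lborel) = (\<integral>\<^sup>+ v. F v \<partial>distr lborel borel ((+) (- w)))"
    by (simp add: lborel_distr_plus)
  also have "\<dots> = (\<integral>\<^sup>+ v. F (v - w) \<partial>lborel)"
    by (subst nn_integral_distr) auto
  finally show ?thesis ..
qed

lemma nn_integral_lborel_reflect:
  fixes F :: "'a::euclidean_space \<Rightarrow> ennreal"
  assumes [measurable]: "F \<in> borel_measurable borel"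
  shows "(\<integral>\<^sup>+ x. F (w - x) \<partial>lborel) = (\<integral>\<^sup>+ v. F v \<partial>lborel)"
proof -
  have "distr lborel borel (\<lambda>x. w - x) = (lborel :: 'a measure)"
    using lborel_affine[of "-1::real" w] by (simp add: density_1)
  then have "(\<integral>\<^sup>+ v. F v \<partial>lborel) = (\<integral>\<^sup>+ v. F v \<partial>distr lborel borel (\<lambda>x. w - x))"
    by simp
  also have "\<dots> = (\<integral>\<^sup>+ x. F (w - x) \<partial>lborel)"
    by (subst nn_integral_distr) auto
  finally show ?thesis ..
qed

lemma nn_integral_lborel_average_translates:
  fixes F :: "'a::euclidean_space \<Rightarrow> ennreal"
  assumes "prob_space M" and [measurable_cong]: "sets M = sets borel"
    and [measurable]: "F \<in> borel_measurable borel"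
  shows "(\<integral>\<^sup>+ v. \<integral>\<^sup>+ y. F (v - y) \<partial>M \<partial>lborel) = (\<integral>\<^sup>+ v. F v \<partial>lborel)"
proof -
  interpret prob_space M by fact
  interpret pair_sigma_finite lborel M ..
  have "(\<integral>\<^sup>+ v. \<integral>\<^sup>+ y. F (v - y) \<partial>M \<partial>lborel) = (\<integral>\<^sup>+ y. \<integral>\<^sup>+ v. F (v - y) \<partial>lborel \<partial>M)"
    by (rule Fubini'[symmetric]) measurable
  also have "\<dots> = (\<integral>\<^sup>+ y. (\<integral>\<^sup>+ v. F v \<partial>lborel) \<partial>M)"
    by (simp add: nn_integral_lborel_translate)
  finally show ?thesis by (simp add: emeasure_space_1)
qed

lemma nn_integral_iterated_add:
  fixes A B :: "'a \<Rightarrow> 'b \<Rightarrow> ennreal"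
  assumes "sigma_finite_measure N"
    and A: "case_prod A \<in> borel_measurable (M \<Otimes>\<^sub>M N)" and B: "case_prod B \<in> borel_measurable (M \<Otimes>\<^sub>M N)"
  shows "(\<integral>\<^sup>+ v. \<integral>\<^sup>+ y. A v y \<partial>N \<partial>M) + (\<integral>\<^sup>+ v. \<integral>\<^sup>+ y. B v y \<partial>N \<partial>M)
    = (\<integral>\<^sup>+ v. \<integral>\<^sup>+ y. A v y + B v y \<partial>N \<partial>M)"
proof -
  interpret sigma_finite_measure N by fact
  have "(\<integral>\<^sup>+ v. \<integral>\<^sup>+ y. A v y \<partial>N \<partial>M) + (\<integral>\<^sup>+ v. \<integral>\<^sup>+ y. B v y \<partial>N \<partial>M)
      = (\<integral>\<^sup>+ v. (\<integral>\<^sup>+ y. A v y \<partial>N) + (\<integral>\<^sup>+ y. B v y \<partial>N) \<partial>M)"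
    using borel_measurable_nn_integral[OF A] borel_measurable_nn_integral[OF B]
    by (intro nn_integral_add[symmetric]) auto
  also have "\<dots> = (\<integral>\<^sup>+ v. \<integral>\<^sup>+ y. A v y + B v y \<partial>N \<partial>M)"
    using measurable_Pair2[OF A] measurable_Pair2[OF B]
    by (intro nn_integral_cong nn_integral_add[symmetric]) auto
  finally show ?thesis .
qed

definition ent_integral :: "('a::euclidean_space \<Rightarrow> real) \<Rightarrow> ennreal" where
  "ent_integral u = (\<integral>\<^sup>+ v. cross_ent (u v) (u v) \<partial>lborel)"

lemma ent_integral_mixture:
  fixes u w :: "'a::euclidean_space \<Rightarrow> real"
  assumes [measurable_cong]: "sets M = sets borel" and [measurable]: "u \<in> borel_measurable borel"
    and w: "\<And>v. ennreal (w v) = (\<integral>\<^sup>+ y. ennreal (u (v - y)) \<partial>M)"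
  shows "(\<integral>\<^sup>+ v. \<integral>\<^sup>+ y. cross_ent (u (v - y)) (w v) \<partial>M \<partial>lborel) = ent_integral w"
  unfolding ent_integral_def cross_ent_def
  by (rule nn_integral_cong) (simp add: nn_integral_multc w)

lemma ent_integral_mixture_average_translates:
  fixes f g :: "'a::euclidean_space \<Rightarrow> real" and b c :: "'a measure"
  assumes "prob_space b" "prob_space c"
    and [measurable_cong]: "sets b = sets borel" "sets c = sets borel"
    and [measurable]: "f \<in> borel_measurable borel" "g \<in> borel_measurable borel"
    and g: "\<And>v. ennreal (g v) = (\<integral>\<^sup>+ y. ennreal (f (v - y)) \<partial>c)"
  shows "ent_integral g
    = (\<integral>\<^sup>+ v. \<integral>\<^sup>+ y. \<integral>\<^sup>+ t. cross_ent (f (v - y - t)) (g (v - t)) \<partial>b \<partial>c \<partial>lborel)"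
proof -
  interpret b: prob_space b by fact
  interpret c: prob_space c by fact
  interpret pair_sigma_finite b c ..
  define G where "G w = (\<integral>\<^sup>+ y. cross_ent (f (w - y)) (g w) \<partial>c)" for w
  have [measurable]: "G \<in> borel_measurable borel"
    unfolding G_def by measurable
  have "ent_integral g = (\<integral>\<^sup>+ v. G v \<partial>lborel)"
    unfolding G_def by (rule ent_integral_mixture[symmetric]) (fact, fact, fact g)
  also have "\<dots> = (\<integral>\<^sup>+ v. \<integral>\<^sup>+ t. G (v - t) \<partial>b \<partial>lborel)"
    by (rule nn_integral_lborel_average_translates[symmetric]) (fact, fact, measurable)
  also have "\<dots> = (\<integral>\<^sup>+ v. \<integral>\<^sup>+ t. \<integral>\<^sup>+ y. cross_ent (f (v - y - t)) (g (v - t)) \<partial>c \<partial>b \<partial>lborel)"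
    unfolding G_def by (simp add: algebra_simps)
  also have "\<dots> = (\<integral>\<^sup>+ v. \<integral>\<^sup>+ y. \<integral>\<^sup>+ t. cross_ent (f (v - y - t)) (g (v - t)) \<partial>b \<partial>c \<partial>lborel)"
    by (rule nn_integral_cong, rule Fubini'[symmetric]) measurable
  finally show ?thesis .
qed

text \<open>After Fubini both sides become triple integrals over \<open>lborel\<close>, \<open>c\<close> and \<open>b\<close>, whose
  integrands are compared by the log-sum inequality over \<open>b\<close>.\<close>
lemma ent_integral_submodular:
  fixes f g h k :: "'a::euclidean_space \<Rightarrow> real" and b c :: "'a measure"
  assumes "prob_space b" "prob_space c"
    and [measurable_cong]: "sets b = sets borel" "sets c = sets borel"
    and [measurable]: "f \<in> borel_measurable borel" "g \<in> borel_measurable borel"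
      "h \<in> borel_measurable borel" "k \<in> borel_measurable borel"
    and f01: "\<And>v. 0 \<le> f v \<and> f v \<le> 1" and g01: "\<And>v. 0 \<le> g v \<and> g v \<le> 1"
    and h01: "\<And>v. 0 \<le> h v \<and> h v \<le> 1" and k01: "\<And>v. 0 \<le> k v \<and> k v \<le> 1"
    and g: "\<And>v. ennreal (g v) = (\<integral>\<^sup>+ y. ennreal (f (v - y)) \<partial>c)"
    and h: "\<And>v. ennreal (h v) = (\<integral>\<^sup>+ t. ennreal (f (v - t)) \<partial>b)"
    and k_h: "\<And>v. ennreal (k v) = (\<integral>\<^sup>+ y. ennreal (h (v - y)) \<partial>c)"
    and k_g: "\<And>v. ennreal (k v) = (\<integral>\<^sup>+ t. ennreal (g (v - t)) \<partial>b)"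
  shows "ent_integral k + ent_integral f \<le> ent_integral g + ent_integral h"
proof -
  have sf_b: "sigma_finite_measure b" and sf_c: "sigma_finite_measure c"
    using assms(1,2) by (simp_all add: prob_space_imp_sigma_finite)
  define F where "F w = (\<integral>\<^sup>+ t. cross_ent (f (w - t)) (f (w - t)) \<partial>b)" for w
  define H where "H v y = (\<integral>\<^sup>+ t. cross_ent (f (v - y - t)) (g (v - t)) \<partial>b)" for v y
  have [measurable]: "F \<in> borel_measurable borel" "case_prod H \<in> borel_measurable (lborel \<Otimes>\<^sub>M c)"
    unfolding F_def H_def using sigma_finite_measure.borel_measurable_nn_integral[OF sf_b] by measurable
  have "ent_integral f = (\<integral>\<^sup>+ v. F v \<partial>lborel)"
    unfolding ent_integral_def F_def
    by (rule nn_integral_lborel_average_translates[symmetric]) (fact, fact, measurable)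
  then have ent_f: "ent_integral f = (\<integral>\<^sup>+ v. \<integral>\<^sup>+ y. F (v - y) \<partial>c \<partial>lborel)"
    by (simp add: nn_integral_lborel_average_translates[OF \<open>prob_space c\<close> \<open>sets c = sets borel\<close>])
  have ent_g: "ent_integral g = (\<integral>\<^sup>+ v. \<integral>\<^sup>+ y. H v y \<partial>c \<partial>lborel)"
    unfolding H_def by (rule ent_integral_mixture_average_translates) fact+
  have ent_h: "ent_integral h = (\<integral>\<^sup>+ v. \<integral>\<^sup>+ y. cross_ent (h (v - y)) (h (v - y)) \<partial>c \<partial>lborel)"
    unfolding ent_integral_def
    by (rule nn_integral_lborel_average_translates[symmetric]) (fact, fact, measurable)
  have ent_k: "ent_integral k = (\<integral>\<^sup>+ v. \<integral>\<^sup>+ y. cross_ent (h (v - y)) (k v) \<partial>c \<partial>lborel)"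
    by (rule ent_integral_mixture[symmetric]) (fact, fact, fact k_h)
  have log_sum: "cross_ent (h (v - y)) (k v) + F (v - y) \<le> H v y + cross_ent (h (v - y)) (h (v - y))"
    for v y unfolding F_def H_def
    by (rule log_sum_inequality[OF \<open>prob_space b\<close>]) (use f01 g01 h01 k01 h k_g in \<open>auto simp: algebra_simps\<close>)
  have "ent_integral k + ent_integral f
      = (\<integral>\<^sup>+ v. \<integral>\<^sup>+ y. cross_ent (h (v - y)) (k v) + F (v - y) \<partial>c \<partial>lborel)"
    unfolding ent_k ent_f by (rule nn_integral_iterated_add[OF sf_c]) measurable
  also have "\<dots> \<le> (\<integral>\<^sup>+ v. \<integral>\<^sup>+ y. H v y + cross_ent (h (v - y)) (h (v - y)) \<partial>c \<partial>lborel)"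
    by (intro nn_integral_mono log_sum)
  also have "\<dots> = ent_integral g + ent_integral h"
    unfolding ent_g ent_h by (rule nn_integral_iterated_add[OF sf_c, symmetric]) measurable
  finally show ?thesis .
qed

definition rescale :: "real ^ 'n \<Rightarrow> real ^ 'n \<Rightarrow> real ^ 'n" where
  "rescale r y = (\<chi> i. y $ i / r $ i)"

definition cell :: "real ^ 'n \<Rightarrow> real ^ 'n \<Rightarrow> (real ^ 'n) set" where
  "cell r v = {y. \<forall>i. v $ i \<le> y $ i / r $ i \<and> y $ i / r $ i < v $ i + 1}"

definition cell_prob :: "(real ^ 'n) measure \<Rightarrow> real ^ 'n \<Rightarrow> real ^ 'n \<Rightarrow> real" where
  "cell_prob M r v = measure M (cell r v)"

lemma measurable_vec_nth [measurable (raw)]: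
  "f \<in> borel_measurable M \<Longrightarrow> (\<lambda>x. (f x :: real ^ 'n) $ i) \<in> borel_measurable M"
  using measurable_compose[OF _ borel_measurable_nth] by blast

lemma measurable_rescale [measurable]: "rescale r \<in> borel_measurable borel"
  unfolding rescale_def divide_inverse
  by (intro borel_measurable_continuous_onI continuous_intros)

lemma sets_cell [measurable]: "cell r v \<in> sets borel"
  unfolding cell_def by measurable

lemma pred_in_cell [measurable]: "Measurable.pred (borel \<Otimes>\<^sub>M borel) (\<lambda>(v, y). y \<in> cell r v)"
  unfolding cell_def by measurable

lemma cell_translate: "{a. a + x \<in> cell r v} = cell r (v - rescale r x)"
  unfolding cell_def rescale_def by (auto simp: add_divide_distrib algebra_simps)

lemma cell_prob_nonneg: "0 \<le> cell_prob M r v"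
  by (simp add: cell_prob_def)

lemma cell_prob_le_1: "prob_space M \<Longrightarrow> cell_prob M r v \<le> 1"
  unfolding cell_prob_def by (rule prob_space.prob_le_1)

lemma borel_measurable_cell_prob [measurable]:
  assumes "finite_measure M" "sets M = sets borel"
  shows "cell_prob M r \<in> borel_measurable borel"
proof -
  interpret finite_measure M by fact
  have "{x \<in> space (borel \<Otimes>\<^sub>M M). snd x \<in> cell r (fst x)} \<in> sets (borel \<Otimes>\<^sub>M M)"
    using pred_in_cell[of r] sets_eq_imp_space_eq[OF assms(2)]
    by (simp add: sets_pair_measure_cong[OF refl assms(2)] pred_def case_prod_beta space_pair_measure)
  then show ?thesis
    unfolding cell_prob_def[abs_def]
    by (intro measurable_measure) (use sets_eq_imp_space_eq[OF assms(2)] in auto)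
qed

lemma cell_prob_convolution:
  assumes "finite_measure M" "finite_measure N" "sets M = sets borel" "sets N = sets borel"
  shows "ennreal (cell_prob (M \<star> N) r v)
    = (\<integral>\<^sup>+ y. ennreal (cell_prob M r (v - y)) \<partial>distr N borel (rescale r))"
proof -
  have "(M \<star> N) = (N \<star> M)"
    by (rule convolution_commutative) (use assms in auto)
  moreover have "finite_measure (N \<star> M)"
    by (rule convolution_finite) (use assms in auto)
  ultimately have "ennreal (cell_prob (M \<star> N) r v) = emeasure (N \<star> M) (cell r v)"
    by (simp add: cell_prob_def finite_measure.emeasure_eq_measure)
  also have "\<dots> = (\<integral>\<^sup>+ x. emeasure M {a. a + x \<in> cell r v} \<partial>N)"
    by (rule convolution_emeasure)
      (use assms sets_eq_imp_space_eq[OF assms(3)] sets_eq_imp_space_eq[OF assms(4)] in auto)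
  also have "\<dots> = (\<integral>\<^sup>+ x. ennreal (cell_prob M r (v - rescale r x)) \<partial>N)"
    by (simp add: cell_translate cell_prob_def finite_measure.emeasure_eq_measure[OF assms(1)])
  also have "\<dots> = (\<integral>\<^sup>+ y. ennreal (cell_prob M r (v - y)) \<partial>distr N borel (rescale r))"
    using assms by (subst nn_integral_distr) (auto simp: measurable_cong_sets[OF assms(4) refl])
  finally show ?thesis .
qed

lemma prob_space_convolution:
  assumes "prob_space M" "prob_space N" "sets M = sets borel" "sets N = sets borel"
  shows "prob_space (M \<star> N)"
proof -
  interpret pair_prob_space M N
    using assms(1,2) by (simp add: pair_prob_space_def pair_sigma_finite_def prob_space_imp_sigma_finite)
  show ?thesis
    unfolding convolution_def
    by (rule prob_space_distr) (simp add: measurable_cong_sets[OF sets_pair_measure_cong[OF assms(3,4)] refl])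
qed

lemma convolution_right_swap:
  assumes "finite_measure a" "finite_measure b" "finite_measure c"
    and "sets a = sets borel" "sets b = sets borel" "sets c = sets borel"
  shows "((a \<star> b) \<star> c) = ((a \<star> c) \<star> b)"
proof -
  have "((a \<star> b) \<star> c) = (a \<star> (b \<star> c))"
    by (rule convolution_associative[symmetric]) (use assms in auto)
  also have "(b \<star> c) = (c \<star> b)"
    by (rule convolution_commutative) (use assms in auto)
  also have "(a \<star> (c \<star> b)) = ((a \<star> c) \<star> b)"
    by (rule convolution_associative) (use assms in auto)
  finally show ?thesis .
qed

lemma prob_space_distr_rescale:
  fixes M :: "(real ^ 'n) measure"
  assumes "prob_space M" "sets M = sets borel"
  shows "prob_space (distr M borel (rescale r))"
proof -
  have "rescale r \<in> measurable M borel"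
    unfolding measurable_cong_sets[OF assms(2) refl] by measurable
  then show ?thesis
    by (rule prob_space.prob_space_distr[OF assms(1)])
qed

lemma ent_integral_cell_prob_submodular:
  fixes a b c :: "(real ^ 'n) measure"
  assumes "prob_space a" "prob_space b" "prob_space c"
    and "sets a = sets borel" "sets b = sets borel" "sets c = sets borel"
  shows "ent_integral (cell_prob ((a \<star> b) \<star> c) r) + ent_integral (cell_prob a r)
    \<le> ent_integral (cell_prob (a \<star> c) r) + ent_integral (cell_prob (a \<star> b) r)"
proof -
  have prob_ab: "prob_space (a \<star> b)" and prob_ac: "prob_space (a \<star> c)"
    using assms by (simp_all add: prob_space_convolution)
  then have prob_abc: "prob_space ((a \<star> b) \<star> c)"
    using assms by (simp add: prob_space_convolution)
  have fin: "finite_measure a" "finite_measure b" "finite_measure c"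
    "finite_measure (a \<star> b)" "finite_measure (a \<star> c)" "finite_measure ((a \<star> b) \<star> c)"
    using assms prob_ab prob_ac prob_abc by (simp_all add: prob_space_def)
  have swap: "((a \<star> b) \<star> c) = ((a \<star> c) \<star> b)"
    using fin assms by (intro convolution_right_swap) auto
  show ?thesis
  proof (rule ent_integral_submodular)
    show "ennreal (cell_prob (a \<star> c) r v)
      = (\<integral>\<^sup>+ y. ennreal (cell_prob a r (v - y)) \<partial>distr c borel (rescale r))" for v
      by (rule cell_prob_convolution) (use fin assms in auto)
    show "ennreal (cell_prob (a \<star> b) r v)
      = (\<integral>\<^sup>+ t. ennreal (cell_prob a r (v - t)) \<partial>distr b borel (rescale r))" for v
      by (rule cell_prob_convolution) (use fin assms in auto)
    show "ennreal (cell_prob ((a \<star> b) \<star> c) r v)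
      = (\<integral>\<^sup>+ y. ennreal (cell_prob (a \<star> b) r (v - y)) \<partial>distr c borel (rescale r))" for v
      by (rule cell_prob_convolution) (use fin assms in auto)
    show "ennreal (cell_prob ((a \<star> b) \<star> c) r v)
      = (\<integral>\<^sup>+ t. ennreal (cell_prob (a \<star> c) r (v - t)) \<partial>distr b borel (rescale r))" for v
      unfolding swap by (rule cell_prob_convolution) (use fin assms in auto)
    show "prob_space (distr b borel (rescale r))" "prob_space (distr c borel (rescale r))"
      "sets (distr b borel (rescale r)) = sets borel" "sets (distr c borel (rescale r)) = sets borel"
      using assms by (simp_all add: prob_space_distr_rescale)
    show "cell_prob a r \<in> borel_measurable borel" "cell_prob (a \<star> c) r \<in> borel_measurable borel"
      "cell_prob (a \<star> b) r \<in> borel_measurable borel" "cell_prob ((a \<star> b) \<star> c) r \<in> borel_measurable borel"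
      using fin assms by (auto intro: borel_measurable_cell_prob)
  qed (use assms(1) prob_ab prob_ac prob_abc in \<open>simp_all add: cell_prob_nonneg cell_prob_le_1\<close>)
qed

lemma cell_prob_support_bounded:
  fixes M :: "(real ^ 'n) measure"
  assumes "cs_prob M" "\<forall>i. 0 < r $ i"
  obtains R where "\<And>v i. cell_prob M r v \<noteq> 0 \<Longrightarrow> \<bar>v $ i\<bar> \<le> R"
proof -
  obtain K where "prob_space M" "sets M = sets borel" "compact K" "emeasure M K = 1"
    using assms(1) unfolding cs_prob_def by blast
  interpret prob_space M by fact
  have K: "K \<in> events"
    using \<open>compact K\<close> \<open>sets M = sets borel\<close> by (simp add: compact_imp_closed)
  obtain B where B: "\<And>y. y \<in> K \<Longrightarrow> norm y \<le> B"
    using compact_imp_bounded[OF \<open>compact K\<close>] bounded_iff by blast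
  define R where "R = (\<Sum>i\<in>UNIV. \<bar>B\<bar> / r $ i) + 1"
  have "\<bar>v $ i\<bar> \<le> R" if "cell_prob M r v \<noteq> 0" for v i
  proof -
    have "\<not> cell r v \<subseteq> space M - K"
    proof
      assume "cell r v \<subseteq> space M - K"
      then have "cell_prob M r v \<le> prob (space M - K)"
        unfolding cell_prob_def using K by (intro finite_measure_mono) auto
      also have "\<dots> = 0"
        using prob_compl[OF K] \<open>emeasure M K = 1\<close> by (simp add: emeasure_eq_measure)
      finally show False using that cell_prob_nonneg[of M r v] by simp
    qed
    then obtain y where "y \<in> K" "y \<in> cell r v"
      using sets_eq_imp_space_eq[OF \<open>sets M = sets borel\<close>] by auto
    have "0 < r $ i" using assms(2) by simp
    have "\<bar>y $ i\<bar> / r $ i \<le> \<bar>B\<bar> / r $ i"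
      using B[OF \<open>y \<in> K\<close>] component_le_norm_cart[of y i] \<open>0 < r $ i\<close>
      by (intro divide_right_mono) auto
    also have "\<dots> \<le> R - 1"
      unfolding R_def using assms(2)
      by (simp, intro member_le_sum) (auto intro: divide_nonneg_pos less_imp_le)
    finally have "\<bar>y $ i / r $ i\<bar> \<le> R - 1"
      using \<open>0 < r $ i\<close> by (simp add: abs_div)
    with \<open>y \<in> cell r v\<close> show ?thesis
      unfolding cell_def by (smt (verit) mem_Collect_eq)
  qed
  then show ?thesis by (rule that)
qed

lemma ent_integral_cell_prob_finite:
  fixes M :: "(real ^ 'n) measure"
  assumes "cs_prob M" "\<forall>i. 0 < r $ i"
  shows "ent_integral (cell_prob M r) < \<infinity>"
proof -
  obtain R where R: "\<And>v i. cell_prob M r v \<noteq> 0 \<Longrightarrow> \<bar>v $ i\<bar> \<le> R"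
    using cell_prob_support_bounded[OF assms] by blast
  have "prob_space M" using assms(1) by (simp add: cs_prob_def)
  define S where "S = cbox (- (\<chi> i. R)) (\<chi> i. R :: real ^ 'n)"
  have "cross_ent (cell_prob M r v) (cell_prob M r v) \<le> indicator S v" for v
  proof (cases "cell_prob M r v = 0")
    case False
    then have "v \<in> S" using R[OF False] by (simp add: S_def mem_box_cart abs_le_iff minus_le_iff)
    moreover have "- (cell_prob M r v * ln (cell_prob M r v)) \<le> 1"
      by (rule neg_mult_ln_le_one[OF cell_prob_nonneg])
    ultimately show ?thesis
      by (simp add: cross_ent_self[OF cell_prob_nonneg cell_prob_le_1[OF \<open>prob_space M\<close>]])
  qed simp
  then have "ent_integral (cell_prob M r) \<le> (\<integral>\<^sup>+ v. indicator S v \<partial>lborel)"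
    unfolding ent_integral_def by (rule nn_integral_mono)
  also have "\<dots> = emeasure lborel S"
    by (simp add: S_def)
  also have "\<dots> < \<infinity>"
    unfolding S_def by (rule emeasure_lborel_cbox_finite)
  finally show ?thesis .
qed

definition real_vec :: "int ^ 'n \<Rightarrow> real ^ 'n" where
  "real_vec z = (\<chi> i. of_int (z $ i))"

lemma finite_int_vec_box: "finite {z :: int ^ 'n. \<forall>i. \<bar>z $ i\<bar> \<le> N}"
proof (rule finite_subset)
  show "{z :: int ^ 'n. \<forall>i. \<bar>z $ i\<bar> \<le> N} \<subseteq> vec_lambda ` (\<Pi>\<^sub>E i \<in> UNIV. {-N..N})"
  proof
    fix z :: "int ^ 'n"
    assume "z \<in> {z. \<forall>i. \<bar>z $ i\<bar> \<le> N}"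
    then have "vec_nth z \<in> (\<Pi>\<^sub>E i \<in> UNIV. {-N..N})" by (force simp: abs_le_iff)
    then show "z \<in> vec_lambda ` (\<Pi>\<^sub>E i \<in> UNIV. {-N..N})" by (metis image_eqI vec_nth_inverse)
  qed
qed (intro finite_imageI finite_PiE; simp)

lemma floor_cell_eq_iff: "floor_cell r x y = z \<longleftrightarrow> y \<in> cell r (real_vec z - x)"
  unfolding floor_cell_def cell_def real_vec_def by (auto simp: vec_eq_iff floor_eq_iff algebra_simps)

lemma cell_entropy_eq_sum:
  fixes M :: "(real ^ 'n) measure"
  assumes "sets M = sets borel" "finite Z" "\<And>z. z \<notin> Z \<Longrightarrow> cell_prob M r (real_vec z - x) = 0"
  shows "cell_entropy M r x
    = (\<Sum>z\<in>Z. - (cell_prob M r (real_vec z - x) * ln (cell_prob M r (real_vec z - x)))) / ln 2"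
proof -
  define p where "p z = cell_prob M r (real_vec z - x)" for z
  have "{y \<in> space M. floor_cell r x y = z} = cell r (real_vec z - x)" for z
    using sets_eq_imp_space_eq[OF assms(1)] by (auto simp: floor_cell_eq_iff)
  then have "cell_entropy M r x = (\<Sum>\<^sub>\<infinity>z. - (p z * log 2 (p z)))"
    by (simp add: cell_entropy_def p_def cell_prob_def)
  also have "\<dots> = (\<Sum>\<^sub>\<infinity>z\<in>Z. - (p z * log 2 (p z)))"
    by (rule infsum_cong_neutral) (use assms(3) in \<open>auto simp: p_def\<close>)
  also have "\<dots> = (\<Sum>z\<in>Z. - (p z * ln (p z))) / ln 2"
    using assms(2) by (simp add: log_def sum_divide_distrib)
  finally show ?thesis by (simp add: p_def)
qed

lemma nn_integral_unit_cube_sum_translates: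
  fixes F :: "real ^ 'n \<Rightarrow> ennreal"
  assumes [measurable]: "F \<in> borel_measurable borel"
    and "finite Z" and Z: "\<And>v. F v \<noteq> 0 \<Longrightarrow> (\<chi> i. \<lceil>v $ i\<rceil>) \<in> Z"
  shows "(\<integral>\<^sup>+ x. indicator {x. \<forall>i. 0 \<le> x $ i \<and> x $ i < 1} x * (\<Sum>z\<in>Z. F (real_vec z - x)) \<partial>lborel)
    = (\<integral>\<^sup>+ v. F v \<partial>lborel)"
    (is "(\<integral>\<^sup>+ x. indicator ?U x * _ \<partial>lborel) = _")
proof -
  have [measurable]: "?U \<in> sets borel" by measurable
  have ceiling_iff: "x \<le> of_int a \<and> of_int a - x < 1 \<longleftrightarrow> a = \<lceil>x\<rceil>" for a :: int and x :: real
    using ceiling_eq_iff[of x a] by linarith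
  have in_U_iff: "real_vec z - v \<in> ?U \<longleftrightarrow> z = (\<chi> i. \<lceil>v $ i\<rceil>)" for z v
    by (simp add: real_vec_def vec_eq_iff ceiling_iff)
  have "(\<integral>\<^sup>+ x. indicator ?U x * (\<Sum>z\<in>Z. F (real_vec z - x)) \<partial>lborel)
      = (\<Sum>z\<in>Z. \<integral>\<^sup>+ x. indicator ?U x * F (real_vec z - x) \<partial>lborel)"
    by (simp add: sum_distrib_left nn_integral_sum)
  also have "\<dots> = (\<Sum>z\<in>Z. \<integral>\<^sup>+ v. indicator ?U (real_vec z - v) * F v \<partial>lborel)"
  proof (rule sum.cong[OF refl])
    fix z
    show "(\<integral>\<^sup>+ x. indicator ?U x * F (real_vec z - x) \<partial>lborel)
      = (\<integral>\<^sup>+ v. indicator ?U (real_vec z - v) * F v \<partial>lborel)"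
      using nn_integral_lborel_reflect[of "\<lambda>v. indicator ?U (real_vec z - v) * F v" "real_vec z"]
      by simp
  qed
  also have "\<dots> = (\<integral>\<^sup>+ v. (\<Sum>z\<in>Z. indicator ?U (real_vec z - v)) * F v \<partial>lborel)"
    by (simp add: sum_distrib_right nn_integral_sum)
  also have "\<dots> = (\<integral>\<^sup>+ v. F v \<partial>lborel)"
  proof (rule nn_integral_cong)
    fix v
    show "(\<Sum>z\<in>Z. indicator ?U (real_vec z - v)) * F v = F v"
    proof (cases "F v = 0")
      case False
      then have "(\<chi> i. \<lceil>v $ i\<rceil>) \<in> Z" by (rule Z)
      then show ?thesis
        unfolding indicator_def in_U_iff using \<open>finite Z\<close> by simp
    qed simp
  qed
  finally show ?thesis .
qed

lemma cell_prob_lattice_support: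
  fixes M :: "(real ^ 'n) measure"
  assumes "cs_prob M" "\<forall>i. 0 < r $ i"
  obtains Z :: "(int ^ 'n) set" where "finite Z"
    and "\<And>x z. \<forall>i. 0 \<le> x $ i \<and> x $ i < 1 \<Longrightarrow> z \<notin> Z \<Longrightarrow> cell_prob M r (real_vec z - x) = 0"
    and "\<And>v. cell_prob M r v \<noteq> 0 \<Longrightarrow> (\<chi> i. \<lceil>v $ i\<rceil>) \<in> Z"
proof -
  obtain R where R: "\<And>v i. cell_prob M r v \<noteq> 0 \<Longrightarrow> \<bar>v $ i\<bar> \<le> R"
    using cell_prob_support_bounded[OF assms] by blast
  define Z where "Z = {z :: int ^ 'n. \<forall>i. \<bar>z $ i\<bar> \<le> \<lceil>R\<rceil> + 1}"
  have "z \<in> Z" if "\<forall>i. 0 \<le> x $ i \<and> x $ i < 1" "cell_prob M r (real_vec z - x) \<noteq> 0" for x z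
  proof -
    have "\<bar>z $ i\<bar> \<le> \<lceil>R\<rceil> + 1" for i
    proof -
      have "\<bar>of_int (z $ i) - x $ i\<bar> \<le> R"
        using R[OF that(2), of i] by (simp add: real_vec_def)
      then have "\<bar>of_int (z $ i)\<bar> \<le> real_of_int (\<lceil>R\<rceil> + 1)"
        using that(1)[rule_format, of i] le_of_int_ceiling[of R] by linarith
      then show ?thesis
        by (simp only: of_int_abs[symmetric] of_int_le_iff)
    qed
    then show ?thesis by (simp add: Z_def)
  qed
  moreover have "(\<chi> i. \<lceil>v $ i\<rceil>) \<in> Z" if "cell_prob M r v \<noteq> 0" for v
  proof -
    have "\<bar>\<lceil>v $ i\<rceil>\<bar> \<le> \<lceil>R\<rceil> + 1" for i
    proof -
      have "\<bar>of_int \<lceil>v $ i\<rceil>\<bar> \<le> real_of_int (\<lceil>R\<rceil> + 1)"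
        using R[OF that, of i] ceiling_correct[of "v $ i"] le_of_int_ceiling[of R] by linarith
      then show ?thesis
        by (simp only: of_int_abs[symmetric] of_int_le_iff)
    qed
    then show ?thesis by (simp add: Z_def)
  qed
  moreover have "finite Z" unfolding Z_def by (rule finite_int_vec_box)
  ultimately show ?thesis using that by blast
qed

lemma avg_entropy_eq_ent_integral:
  fixes M :: "(real ^ 'n) measure"
  assumes "cs_prob M" "\<forall>i. 0 < r $ i"
  shows "avg_entropy M r = enn2real (ent_integral (cell_prob M r)) / ln 2"
proof -
  obtain Z where "finite Z"
    and outside: "\<And>x z. \<forall>i. 0 \<le> x $ i \<and> x $ i < 1 \<Longrightarrow> z \<notin> Z \<Longrightarrow> cell_prob M r (real_vec z - x) = 0"
    and inside: "\<And>v. cell_prob M r v \<noteq> 0 \<Longrightarrow> (\<chi> i. \<lceil>v $ i\<rceil>) \<in> Z"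
    using cell_prob_lattice_support[OF assms] by blast
  have "prob_space M" "sets M = sets borel"
    using assms(1) by (auto simp: cs_prob_def)
  then have [measurable]: "cell_prob M r \<in> borel_measurable borel"
    by (intro borel_measurable_cell_prob) (auto simp: prob_space_def)
  define U where "U = {x :: real ^ 'n. \<forall>i. 0 \<le> x $ i \<and> x $ i < 1}"
  define \<psi> where "\<psi> v = - (cell_prob M r v * ln (cell_prob M r v))" for v
  have [measurable]: "U \<in> sets borel" "\<psi> \<in> borel_measurable borel"
    unfolding U_def \<psi>_def by measurable
  have \<psi>_nonneg: "0 \<le> \<psi> v" for v
    unfolding \<psi>_def using cell_prob_nonneg cell_prob_le_1[OF \<open>prob_space M\<close>] by (rule neg_mult_ln_nonneg)
  have cross_ent_\<psi>: "cross_ent (cell_prob M r v) (cell_prob M r v) = ennreal (\<psi> v)" for v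
    unfolding \<psi>_def using cell_prob_nonneg cell_prob_le_1[OF \<open>prob_space M\<close>] by (rule cross_ent_self)
  have "indicator U x * cell_entropy M r x = indicator U x * (\<Sum>z\<in>Z. \<psi> (real_vec z - x)) / ln 2" for x
    using outside cell_entropy_eq_sum[OF \<open>sets M = sets borel\<close> \<open>finite Z\<close>]
    by (cases "x \<in> U") (simp_all add: \<psi>_def U_def)
  then have "avg_entropy M r = (\<integral>x. indicator U x * (\<Sum>z\<in>Z. \<psi> (real_vec z - x)) \<partial>lborel) / ln 2"
    by (simp add: avg_entropy_def set_lebesgue_integral_def U_def[symmetric])
  also have "(\<integral>x. indicator U x * (\<Sum>z\<in>Z. \<psi> (real_vec z - x)) \<partial>lborel)
      = enn2real (\<integral>\<^sup>+ x. indicator U x * (\<Sum>z\<in>Z. cross_ent (cell_prob M r (real_vec z - x))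
          (cell_prob M r (real_vec z - x))) \<partial>lborel)"
    by (subst integral_eq_nn_integral)
      (measurable, auto simp: U_def cross_ent_\<psi> \<psi>_nonneg sum_nonneg ennreal_mult' ennreal_indicator
        intro!: arg_cong[where f=enn2real] nn_integral_cong)
  also have "\<dots> = enn2real (ent_integral (cell_prob M r))"
    unfolding ent_integral_def U_def
    by (subst nn_integral_unit_cube_sum_translates) (auto intro!: inside \<open>finite Z\<close>)
  finally show ?thesis .
qed

lemma cs_prob_return_0: "cs_prob (return borel (0 :: real ^ 'n))"
  unfolding cs_prob_def by (intro conjI exI[of _ "{0}"]) (auto intro: prob_space_return)

lemma cs_prob_convolution:
  fixes M N :: "(real ^ 'n) measure"
  assumes "cs_prob M" "cs_prob N"
  shows "cs_prob (M \<star> N)"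
proof -
  obtain KM KN where "prob_space M" "sets M = sets borel" "compact KM" "emeasure M KM = 1"
    and "prob_space N" "sets N = sets borel" "compact KN" "emeasure N KN = 1"
    using assms unfolding cs_prob_def by blast
  interpret M: prob_space M by fact
  interpret N: prob_space N by fact
  interpret pair_prob_space M N ..
  have prob: "prob_space (M \<star> N)"
    by (rule prob_space_convolution) fact+
  define K where "K = {x + y | x y. x \<in> KM \<and> y \<in> KN}"
  have "compact K" unfolding K_def using \<open>compact KM\<close> \<open>compact KN\<close> by (rule compact_sums)
  have [measurable]: "K \<in> sets borel" using compact_imp_closed[OF \<open>compact K\<close>] by simp
  have add [measurable]: "(\<lambda>(x, y). x + y) \<in> measurable (M \<Otimes>\<^sub>M N) borel"
    by (simp add: measurable_cong_sets[OF sets_pair_measure_cong[OF \<open>sets M = _\<close> \<open>sets N = _\<close>] refl])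
  have "1 = emeasure (M \<Otimes>\<^sub>M N) (KM \<times> KN)"
    using \<open>compact KM\<close> \<open>compact KN\<close> \<open>sets M = _\<close> \<open>sets N = _\<close> \<open>emeasure M KM = 1\<close> \<open>emeasure N KN = 1\<close>
    by (subst N.emeasure_pair_measure_Times) (auto simp: compact_imp_closed)
  also have "\<dots> \<le> emeasure (M \<star> N) K"
    unfolding convolution_def emeasure_distr[OF add \<open>K \<in> sets borel\<close>]
    using sets_eq_imp_space_eq[OF \<open>sets M = _\<close>] sets_eq_imp_space_eq[OF \<open>sets N = _\<close>]
    by (intro emeasure_mono measurable_sets[OF add \<open>K \<in> sets borel\<close>]) (auto simp: K_def space_pair_measure)
  finally have "emeasure (M \<star> N) K = 1"
    using prob_space.emeasure_le_1[OF prob] by (simp add: antisym)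
  then show ?thesis
    unfolding cs_prob_def using prob \<open>compact K\<close> by auto
qed

lemma cs_prob_conv_pow: "cs_prob N \<Longrightarrow> cs_prob (conv_pow N k)"
  by (induction k) (auto intro: cs_prob_convolution cs_prob_return_0)

lemma convolution_return_0:
  fixes M :: "(real ^ 'n) measure"
  assumes "finite_measure M" "sets M = sets borel"
  shows "(M \<star> return borel 0) = M"
proof (rule measure_eqI)
  fix A assume "A \<in> sets (M \<star> return borel 0)"
  then have [measurable]: "A \<in> sets borel" by simp
  have "finite_measure (return borel (0 :: real ^ 'n))"
    using prob_space_return[of "0 :: real ^ 'n" borel] unfolding prob_space_def by simp
  then have "emeasure (M \<star> return borel 0) A = (\<integral>\<^sup>+ x. \<integral>\<^sup>+ y. indicator A (x + y) \<partial>return borel 0 \<partial>M)"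
    using assms by (intro convolution_emeasure') auto
  also have "\<dots> = emeasure M A"
    using assms(2) by (simp add: nn_integral_return)
  finally show "emeasure (M \<star> return borel 0) A = emeasure M A" .
qed (use assms in simp)

lemma avg_entropy_submodular:
  fixes a b c :: "(real ^ 'n) measure"
  assumes "cs_prob a" "cs_prob b" "cs_prob c" "\<forall>i. 0 < r $ i"
  shows "avg_entropy ((a \<star> b) \<star> c) r + avg_entropy a r \<le> avg_entropy (a \<star> c) r + avg_entropy (a \<star> b) r"
proof -
  have cs: "cs_prob (a \<star> b)" "cs_prob (a \<star> c)" "cs_prob ((a \<star> b) \<star> c)"
    using assms by (auto intro: cs_prob_convolution)
  note finite = ent_integral_cell_prob_finite[OF _ assms(4)]
  have "ent_integral (cell_prob ((a \<star> b) \<star> c) r) + ent_integral (cell_prob a r)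
      \<le> ent_integral (cell_prob (a \<star> c) r) + ent_integral (cell_prob (a \<star> b) r)"
    using assms by (intro ent_integral_cell_prob_submodular) (auto simp: cs_prob_def)
  then have "enn2real (ent_integral (cell_prob ((a \<star> b) \<star> c) r)) + enn2real (ent_integral (cell_prob a r))
      \<le> enn2real (ent_integral (cell_prob (a \<star> c) r)) + enn2real (ent_integral (cell_prob (a \<star> b) r))"
    using finite assms(1) cs by (subst (1 2) enn2real_plus[symmetric]) (auto intro: enn2real_mono)
  then show ?thesis
    using assms cs
    by (simp add: avg_entropy_eq_ent_integral add_divide_distrib[symmetric] divide_right_mono)
qed

theorem lemma2p7:
  fixes \<mu> \<nu> :: "(real ^ 'n) measure" and r :: "real ^ 'n" and k :: nat
  assumes "cs_prob \<mu>" and "cs_prob \<nu>"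
    and "\<forall>i. r $ i > 0"
    and "k \<ge> 1"
  shows "avg_entropy (convolution \<mu> (conv_pow \<nu> k)) r - avg_entropy \<mu> r
           \<le> real k * (avg_entropy (convolution \<mu> \<nu>) r - avg_entropy \<mu> r)"
proof -
  have fin_sets: "finite_measure M" "sets M = sets borel" if "cs_prob M" for M :: "(real ^ 'n) measure"
    using that by (auto simp: cs_prob_def prob_space_def)
  have step: "(\<mu> \<star> conv_pow \<nu> (Suc j)) = ((\<mu> \<star> conv_pow \<nu> j) \<star> \<nu>)" for j
    using fin_sets[OF assms(2)] fin_sets[OF cs_prob_conv_pow[OF assms(2), of j]] fin_sets[OF assms(1)]
    by (simp add: convolution_commutative[of \<nu>] convolution_associative)
  have increment: "avg_entropy (\<mu> \<star> conv_pow \<nu> (Suc j)) r - avg_entropy (\<mu> \<star> conv_pow \<nu> j) r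
      \<le> avg_entropy (\<mu> \<star> \<nu>) r - avg_entropy \<mu> r" for j
    using avg_entropy_submodular[OF assms(1) cs_prob_conv_pow[OF assms(2), of j] assms(2,3)]
    unfolding step by linarith
  show ?thesis
  proof (induction k)
    case 0
    then show ?case using fin_sets[OF assms(1)] by (simp add: convolution_return_0)
  next
    case (Suc k)
    then show ?case using increment[of k] by (simp add: algebra_simps)
  qed
qed

end
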